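(* Let $V$ be a real vector space and $X$ a set of points lying on a line $\ell$ of $V$. The following are equivalent: (i) $Co(V,X)$ is topologically scattered (as a subspace of $\mathbf{2}^X$ with the product topology); (ii) $Co(V,X)$ is order-scattered; (iii) the semilattice of compact elements of $Co(V,X)$ is order-scattered; (iv) $X$ is order-scattered with respect to the linear order induced on $\ell$ (by identifying $\ell$ with the real line).
   Context: $Co(V,X)$ is the family of sets $C\cap X$ with $C$ convex in $V$, ordered by inclusion; its compact elements are the sets $\mathrm{conv}(F)\cap X$ with $F\subseteq X$ finite. A poset is order-scattered if it contains no copy of the chain $\mathbb{Q}$. A topological space is scattered if every non-empty subset has an isolated point in the induced topology; $\mathbf{2}^X\cong\mathcal{P}(X)$ carries the product topology of discrete two-point spaces. *)

theory Defs
  imports "HOL-Analysis.Analysis"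
begin

text \<open>Co(V,X): traces on X of convex subsets of the real vector space V (= the type 'v).\<close>
definition Co :: "'v::real_vector set \<Rightarrow> 'v set set" where
  "Co X = {C \<inter> X | C. convex C}"

text \<open>Compact elements of Co(V,X): conv(F) \<inter> X with F a finite subset of X.\<close>
definition Co_compact :: "'v::real_vector set \<Rightarrow> 'v set set" where
  "Co_compact X = {convex hull F \<inter> X | F. finite F \<and> F \<subseteq> X}"

definition order_scattered :: "'a::order set \<Rightarrow> bool" where
  "order_scattered P \<longleftrightarrow> \<not> (\<exists>f::rat \<Rightarrow> 'a. range f \<subseteq> P \<and> strict_mono f)"

definition scattered_space :: "'a topology \<Rightarrow> bool" where
  "scattered_space T \<longleftrightarrow>
     (\<forall>S. S \<subseteq> topspace T \<and> S \<noteq> {} \<longrightarrow>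
          (\<exists>x\<in>S. \<exists>U. openin T U \<and> U \<inter> S = {x}))"

definition char_on :: "'a set \<Rightarrow> 'a set \<Rightarrow> ('a \<Rightarrow> bool)" where
  "char_on X S = restrict (\<lambda>x. x \<in> S) X"

definition cantor_cube :: "'a set \<Rightarrow> ('a \<Rightarrow> bool) topology" where
  "cantor_cube X = product_topology (\<lambda>_. discrete_topology UNIV) X"

definition family_topology :: "'a set \<Rightarrow> 'a set set \<Rightarrow> ('a \<Rightarrow> bool) topology" where
  "family_topology X F = subtopology (cantor_cube X) (char_on X ` F)"

end

theory Submission
  imports Defs
begin

text \<open>
  Identify X with the set T = {t. a + t d \<in> X} of reals; traces on X of convex sets then become
  order-convex subsets of T.  A copy of \<rat> in T yields a strictly increasing chain of traces of
  segments with a common left endpoint, all of them compact elements.  A copy of \<rat> in Co(V,X),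
  on the other hand, yields the family of unions of its initial parts: these lie in Co(V,X) and no
  finite set of points isolates one of them, because finitely many points of a union are already
  covered by an earlier stage of the chain; so the family is a nonempty subset of 2^X without
  isolated points.  Conversely, from such a family of order-convex subsets of T one extracts, after
  fixing a point common to all members, a family of initial segments of T without isolated points.
  The points of T separated by one of these segments carry a dense relation, and \<rat> embeds into
  any dense relation by Cantor's construction along an enumeration of \<rat>.
\<close>

section \<open>Dense relations contain copies of the rationals\<close>

lemma dense_relation_finite_extension:
  fixes h :: "rat \<Rightarrow> 'a"
  assumes trans: "\<And>x y z. R x y \<Longrightarrow> R y z \<Longrightarrow> R x z"
    and dense: "\<And>x y. R x y \<Longrightarrow> \<exists>z. R x z \<and> R z y"
    and "R lo hi" and "finite F"
    and bounds: "\<forall>p\<in>F. R lo (h p) \<and> R (h p) hi"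
    and mono: "\<forall>p\<in>F. \<forall>p'\<in>F. p < p' \<longrightarrow> R (h p) (h p')"
  obtains z where "R lo z" "R z hi" "\<forall>p\<in>F. p < q \<longrightarrow> R (h p) z" "\<forall>p\<in>F. q < p \<longrightarrow> R z (h p)"
proof -
  define L where "L = {p\<in>F. p < q}"
  define U where "U = {p\<in>F. q < p}"
  have mono_le: "h p = h p' \<or> R (h p) (h p')" if "p \<in> F" "p' \<in> F" "p \<le> p'" for p p'
    using mono that by (auto simp: le_less)
  obtain l where l_lo: "l = lo \<or> R lo l" and l_L: "\<forall>p\<in>L. h p = l \<or> R (h p) l"
    and l_U: "\<forall>p\<in>U. R l (h p)" and l_hi: "R l hi"
  proof (cases "L = {}")
    case True
    then show ?thesis using that[of lo] bounds \<open>R lo hi\<close> by (auto simp: U_def)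
  next
    case False
    moreover have "finite L" using \<open>finite F\<close> by (simp add: L_def)
    ultimately have max: "Max L \<in> L" "\<And>p. p \<in> L \<Longrightarrow> p \<le> Max L" by auto
    show ?thesis
    proof (rule that)
      show "h (Max L) = lo \<or> R lo (h (Max L))" "R (h (Max L)) hi"
        using max bounds by (auto simp: L_def)
      show "\<forall>p\<in>L. h p = h (Max L) \<or> R (h p) (h (Max L))"
        using max mono_le by (auto simp: L_def)
      show "\<forall>p\<in>U. R (h (Max L)) (h p)"
        using max mono by (auto simp: L_def U_def)
    qed
  qed
  obtain u where u_hi: "u = hi \<or> R u hi" and u_U: "\<forall>p\<in>U. u = h p \<or> R u (h p)" and "R l u"
  proof (cases "U = {}")
    case True
    then show ?thesis using that[of hi] l_hi by auto
  next
    case False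
    moreover have "finite U" using \<open>finite F\<close> by (simp add: U_def)
    ultimately have min: "Min U \<in> U" "\<And>p. p \<in> U \<Longrightarrow> Min U \<le> p" by auto
    show ?thesis
    proof (rule that)
      show "h (Min U) = hi \<or> R (h (Min U)) hi" "R l (h (Min U))"
        using min bounds l_U by (auto simp: U_def)
      show "\<forall>p\<in>U. h (Min U) = h p \<or> R (h (Min U)) (h p)"
        using min mono_le by (auto simp: U_def)
    qed
  qed
  obtain z where "R l z" "R z u" using dense[OF \<open>R l u\<close>] by blast
  show ?thesis
  proof (rule that)
    show "R lo z" using l_lo \<open>R l z\<close> by (auto intro: trans)
    show "R z hi" using u_hi \<open>R z u\<close> by (auto intro: trans)
    show "\<forall>p\<in>F. p < q \<longrightarrow> R (h p) z" using l_L \<open>R l z\<close> unfolding L_def by (auto intro: trans)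
    show "\<forall>p\<in>F. q < p \<longrightarrow> R z (h p)" using u_U \<open>R z u\<close> unfolding U_def by (auto intro: trans)
  qed
qed

text \<open>Cantor's construction: enumerate \<rat> as e 0, e 1, \<dots> and place the image of e n between the
  images already placed, as dictated by the order of \<rat>.\<close>
lemma dense_relation_embeds_rat:
  assumes trans: "\<And>x y z. R x y \<Longrightarrow> R y z \<Longrightarrow> R x z"
    and dense: "\<And>x y. R x y \<Longrightarrow> \<exists>z. R x z \<and> R z y"
    and "R lo hi"
  obtains f :: "rat \<Rightarrow> 'a" where "\<And>q q'. q < q' \<Longrightarrow> R (f q) (f q')"
proof -
  obtain e :: "nat \<Rightarrow> rat" where "bij e"
    using bij_betw_from_nat_into[of "UNIV :: rat set"] by (auto simp: infinite_UNIV_char_0)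
  then have e: "inj e" "surj e" by (auto simp: bij_def)
  define good where "good n h \<longleftrightarrow> (\<forall>p\<in>e ` {..<n}. R lo (h p) \<and> R (h p) hi) \<and>
      (\<forall>p\<in>e ` {..<n}. \<forall>p'\<in>e ` {..<n}. p < p' \<longrightarrow> R (h p) (h p'))" for n and h :: "rat \<Rightarrow> 'a"
  have "\<exists>H. \<forall>n. good n (H n) \<and> (\<forall>p\<in>e ` {..<n}. H (Suc n) p = H n p)"
  proof (rule dependent_nat_choice)
    show "\<exists>h. good 0 h" by (simp add: good_def)
  next
    fix h n assume "good n h"
    obtain z where z: "R lo z" "R z hi"
      "\<forall>p\<in>e ` {..<n}. p < e n \<longrightarrow> R (h p) z" "\<forall>p\<in>e ` {..<n}. e n < p \<longrightarrow> R z (h p)"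
      by (rule dense_relation_finite_extension[OF trans dense \<open>R lo hi\<close>,
            where F = "e ` {..<n}" and h = h and q = "e n"])
        (use \<open>good n h\<close> in \<open>auto simp: good_def\<close>)
    have new: "e n \<notin> e ` {..<n}" using e(1) by (auto dest: injD)
    have "e ` {..<Suc n} = insert (e n) (e ` {..<n})" by (simp add: lessThan_Suc)
    then have "good (Suc n) (h(e n := z))"
      using \<open>good n h\<close> z new unfolding good_def by (auto simp: not_less_iff_gr_or_eq)
    moreover have "\<forall>p\<in>e ` {..<n}. (h(e n := z)) p = h p" using new by (metis fun_upd_other)
    ultimately show "\<exists>h'. good (Suc n) h' \<and> (\<forall>p\<in>e ` {..<n}. h' p = h p)" by blast
  qed
  then obtain H where good: "\<And>n. good n (H n)"
    and extends: "\<And>n p. p \<in> e ` {..<n} \<Longrightarrow> H (Suc n) p = H n p" by blast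
  have stable: "H m p = H n p" if "n \<le> m" "p \<in> e ` {..<n}" for m n p
    using that(1)
  proof (induction m rule: dec_induct)
    case (step m)
    then have "p \<in> e ` {..<m}" using \<open>p \<in> e ` {..<n}\<close> by auto
    then show ?case using step.IH by (simp add: extends)
  qed simp
  have dom: "p \<in> e ` {..<n}" if "inv e p < n" for p n
    using that surj_f_inv_f[OF e(2)] by (metis image_eqI lessThan_iff)
  show ?thesis
  proof (rule that)
    fix q q' :: rat assume "q < q'"
    define N where "N = Suc (max (inv e q) (inv e q'))"
    have "inv e q < N" "inv e q' < N" by (simp_all add: N_def)
    then have "R (H N q) (H N q')"
      using good[of N] dom \<open>q < q'\<close> unfolding good_def by blast
    moreover have "H N q = H (Suc (inv e q)) q" "H N q' = H (Suc (inv e q')) q'"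
      using stable dom unfolding N_def by auto
    ultimately show "R (H (Suc (inv e q)) q) (H (Suc (inv e q')) q')" by simp
  qed
qed

section \<open>Families of sets without isolated points\<close>

definition perfect_family :: "'a set set \<Rightarrow> bool" where
  "perfect_family S \<longleftrightarrow> (\<forall>A\<in>S. \<forall>G. finite G \<longrightarrow> (\<exists>B\<in>S. B \<noteq> A \<and> B \<inter> G = A \<inter> G))"

lemma perfect_familyE:
  assumes "perfect_family S" "A \<in> S" "finite G"
  obtains B where "B \<in> S" "B \<noteq> A" "B \<inter> G = A \<inter> G"
  using assms unfolding perfect_family_def by meson

lemma not_perfect_familyE:
  assumes "\<not> perfect_family S"
  obtains A G where "A \<in> S" "finite G" "\<And>B. B \<in> S \<Longrightarrow> B \<inter> G = A \<inter> G \<Longrightarrow> B = A"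
  using assms unfolding perfect_family_def by meson

lemma perfect_family_restrict:
  assumes "perfect_family S" "finite H"
  shows "perfect_family {B\<in>S. B \<inter> H = A \<inter> H}"
  unfolding perfect_family_def
proof (intro ballI allI impI)
  fix B G assume B: "B \<in> {B\<in>S. B \<inter> H = A \<inter> H}" and "finite (G :: 'a set)"
  then have "B \<in> S" "finite (G \<union> H)" using \<open>finite H\<close> by auto
  then obtain B' where "B' \<in> S" "B' \<noteq> B" "B' \<inter> (G \<union> H) = B \<inter> (G \<union> H)"
    using assms(1) by (elim perfect_familyE)
  then show "\<exists>B'\<in>{B\<in>S. B \<inter> H = A \<inter> H}. B' \<noteq> B \<and> B' \<inter> G = B \<inter> G"
    using B by blast
qed

lemma perfect_family_image:
  fixes g :: "'a set \<Rightarrow> 'b set"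
  assumes "perfect_family S" "inj_on g S"
    and local: "\<And>G. finite G \<Longrightarrow> \<exists>G'::'a set. finite G' \<and>
      (\<forall>A\<in>S. \<forall>B\<in>S. A \<inter> G' = B \<inter> G' \<longrightarrow> g A \<inter> G = g B \<inter> G)"
  shows "perfect_family (g ` S)"
  unfolding perfect_family_def
proof (intro ballI allI impI)
  fix K and G :: "'b set" assume "K \<in> g ` S" and "finite G"
  then obtain A where A: "A \<in> S" "K = g A" by blast
  obtain G' where "finite G'" and G': "\<forall>A\<in>S. \<forall>B\<in>S. A \<inter> G' = B \<inter> G' \<longrightarrow> g A \<inter> G = g B \<inter> G"
    using local[OF \<open>finite G\<close>] by blast
  obtain B where B: "B \<in> S" "B \<noteq> A" "B \<inter> G' = A \<inter> G'"
    using assms(1) A(1) \<open>finite G'\<close> by (rule perfect_familyE)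
  then have "g B \<noteq> g A" using inj_onD[OF assms(2)] A(1) by blast
  moreover have "g B \<inter> G = g A \<inter> G" using G' A(1) B by blast
  ultimately show "\<exists>K'\<in>g ` S. K' \<noteq> K \<and> K' \<inter> G = K \<inter> G"
    using A B(1) by blast
qed

lemma perfect_family_has_nonempty_member:
  assumes "perfect_family S" "S \<noteq> {}"
  obtains A x where "A \<in> S" "x \<in> A"
proof -
  obtain A where "A \<in> S" using assms(2) by blast
  moreover obtain B where "B \<in> S" "B \<noteq> A"
    using assms(1) \<open>A \<in> S\<close> unfolding perfect_family_def by blast
  ultimately show ?thesis using that by blast
qed

lemma perfect_family_lower_unions:
  fixes f :: "rat \<Rightarrow> 'a set"
  assumes "strict_mono f"
  shows "perfect_family (range (\<lambda>r. \<Union>(f ` {..<r})))"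
  unfolding perfect_family_def
proof (intro ballI allI impI)
  define U where "U r = \<Union>(f ` {..<r})" for r
  have mono_f: "q \<le> q' \<Longrightarrow> f q \<subseteq> f q'" for q q'
    using assms by (simp add: strict_mono_less_eq)
  fix A G assume "A \<in> range (\<lambda>r. \<Union>(f ` {..<r}))" "finite (G :: 'a set)"
  then obtain r where "A = U r" by (auto simp: U_def)
  obtain q0 where "q0 < r" "G \<inter> U r \<subseteq> f q0"
  proof (rule finite_subset_Union_chain[where \<A> = UNIV and \<B> = "f ` {..<r}"])
    show "finite (G \<inter> U r)" using \<open>finite G\<close> by simp
    show "G \<inter> U r \<subseteq> \<Union>(f ` {..<r})" by (simp add: U_def)
    have "r - 1 \<in> {..<r}" by simp
    then show "f ` {..<r} \<noteq> {}" by blast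
    show "subset.chain UNIV (f ` {..<r})"
      unfolding subset_chain_def using mono_f by (metis image_iff linear subset_UNIV)
  qed (use that in blast)
  obtain r1 r2 where "q0 < r1" "r1 < r2" "r2 < r" using dense \<open>q0 < r\<close> by metis
  have "U r1 \<subseteq> U r" using \<open>r1 < r2\<close> \<open>r2 < r\<close> unfolding U_def by (intro UN_mono) auto
  moreover have "G \<inter> U r \<subseteq> U r1" using \<open>G \<inter> U r \<subseteq> f q0\<close> \<open>q0 < r1\<close> by (auto simp: U_def)
  ultimately have agree: "U r1 \<inter> G = U r \<inter> G" by blast
  have "U r1 \<noteq> U r"
  proof -
    have "U r1 \<subseteq> f r1" unfolding U_def by (rule UN_least) (simp add: mono_f)
    moreover have "f r1 \<subset> f r2" using assms \<open>r1 < r2\<close> by (simp add: strict_mono_def)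
    moreover have "f r2 \<subseteq> U r" using \<open>r2 < r\<close> by (auto simp: U_def)
    ultimately show ?thesis by blast
  qed
  moreover have "U r1 \<in> range (\<lambda>r. \<Union>(f ` {..<r}))" by (simp add: U_def)
  ultimately show "\<exists>B\<in>range (\<lambda>r. \<Union>(f ` {..<r})). B \<noteq> A \<and> B \<inter> G = A \<inter> G"
    using agree \<open>A = U r\<close> by metis
qed

section \<open>Perfect families of order-convex sets\<close>

definition initial_segment :: "'a::linorder set \<Rightarrow> 'a set \<Rightarrow> bool" where
  "initial_segment T K \<longleftrightarrow> K \<subseteq> T \<and> (\<forall>x\<in>K. \<forall>y\<in>T. y \<le> x \<longrightarrow> y \<in> K)"

text \<open>Points are related when some segment of the family separates them; perfectness makes this
  relation dense, since two segments agreeing at two points differ at a point strictly in between.\<close>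
lemma perfect_initial_segments_not_order_scattered:
  fixes T :: "'a::linorder set"
  assumes "Q \<noteq> {}" "perfect_family Q" and seg: "\<forall>K\<in>Q. initial_segment T K"
  shows "\<not> order_scattered T"
proof -
  define R where "R x y \<longleftrightarrow> y \<in> T \<and> (\<exists>K\<in>Q. x \<in> K \<and> y \<notin> K)" for x y
  have separated: "x \<in> T \<and> x < y" if "K \<in> Q" "x \<in> K" "y \<in> T" "y \<notin> K" for K x y
    using seg that unfolding initial_segment_def by (meson in_mono not_le)
  then have R_less: "R x y \<Longrightarrow> x \<in> T \<and> x < y" for x y
    unfolding R_def by blast
  have trans: "R x z" if "R x y" "R y z" for x y z
  proof -
    obtain K where "K \<in> Q" "y \<in> K" "z \<notin> K" "z \<in> T" using \<open>R y z\<close> unfolding R_def by blast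
    moreover have "x \<in> K" using seg R_less[OF \<open>R x y\<close>] calculation
      unfolding initial_segment_def by auto
    ultimately show ?thesis unfolding R_def by blast
  qed
  have differ: "\<exists>K1\<in>{K, K'}. \<exists>K2\<in>{K, K'}. \<exists>w. w \<in> K1 \<and> w \<notin> K2" if "K' \<noteq> K" for K K'
    using that by blast
  have dense: "\<exists>w. R x w \<and> R w y" if "R x y" for x y
  proof -
    obtain K where K: "K \<in> Q" "x \<in> K" "y \<notin> K" "y \<in> T" using \<open>R x y\<close> unfolding R_def by blast
    obtain K' where K': "K' \<in> Q" "K' \<noteq> K" "K' \<inter> {x, y} = K \<inter> {x, y}"
      using \<open>perfect_family Q\<close> K(1) by (rule perfect_familyE[where G = "{x, y}"]) simp
    then have "x \<in> K'" "y \<notin> K'" using K by blast+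
    obtain K1 K2 w where "K1 \<in> {K, K'}" "K2 \<in> {K, K'}" "w \<in> K1" "w \<notin> K2"
      using differ K'(2) by blast
    moreover have "x \<in> K2" "y \<notin> K1" using K \<open>x \<in> K'\<close> \<open>y \<notin> K'\<close> calculation by auto
    moreover have "w \<in> T" using K K' calculation seg unfolding initial_segment_def by auto
    ultimately have "R x w" "R w y"
      using K K' unfolding R_def by blast+
    then show ?thesis by blast
  qed
  obtain lo hi where "R lo hi"
  proof -
    obtain K where "K \<in> Q" using assms(1) by blast
    obtain K' where "K' \<in> Q" "K' \<noteq> K"
      using \<open>perfect_family Q\<close> \<open>K \<in> Q\<close> by (rule perfect_familyE[where G = "{}"]) simp
    then obtain K1 K2 w where K12: "K1 \<in> Q" "K2 \<in> Q" "w \<in> K1" "w \<notin> K2"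
      using differ \<open>K \<in> Q\<close> by blast
    obtain K3 where K3: "K3 \<in> Q" "K3 \<noteq> K2" "K3 \<inter> {w} = K2 \<inter> {w}"
      using \<open>perfect_family Q\<close> K12(2) by (rule perfect_familyE[where G = "{w}"]) simp
    then obtain K v where "K \<in> Q" "v \<in> K" "w \<notin> K"
      using differ[OF K3(2)] K12 by blast
    moreover have "w \<in> T" using K12 seg unfolding initial_segment_def by blast
    ultimately show ?thesis using that[of v w] unfolding R_def by blast
  qed
  then obtain f :: "rat \<Rightarrow> 'a" where f: "\<And>q q'. q < q' \<Longrightarrow> R (f q) (f q')"
    using dense_relation_embeds_rat[of R] trans dense by blast
  have "f q \<in> T" for q using R_less f[of q "q + 1"] by simp
  then have "range f \<subseteq> T" by blast
  moreover have "strict_mono f" using R_less f by (auto simp: strict_mono_def)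
  ultimately show ?thesis unfolding order_scattered_def by blast
qed

definition order_convex :: "'a::linorder set \<Rightarrow> 'a set \<Rightarrow> bool" where
  "order_convex T A \<longleftrightarrow> A \<subseteq> T \<and> (\<forall>x\<in>A. \<forall>z\<in>A. \<forall>y\<in>T. x \<le> y \<and> y \<le> z \<longrightarrow> y \<in> A)"

text \<open>Once all members contain a point c, a member B is determined by the initial segments
  below B = {t \<in> T. t < c \<and> t \<notin> B} and upto B = {t \<in> T. t \<le> c \<or> t \<in> B}.  If the sets below B
  do not form a perfect family, one of them is isolated, and on the perfect subfamily where it
  is attained the sets upto B form a perfect family.\<close>
lemma perfect_order_convex_family_not_order_scattered:
  fixes T :: "'a::linorder set"
  assumes "S \<noteq> {}" "perfect_family S" and conv: "\<forall>A\<in>S. order_convex T A"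
  shows "\<not> order_scattered T"
proof -
  obtain A1 c where "A1 \<in> S" "c \<in> A1"
    using perfect_family_has_nonempty_member[OF assms(2,1)] .
  define S1 where "S1 = {B\<in>S. B \<inter> {c} = A1 \<inter> {c}}"
  have "S1 \<noteq> {}" "perfect_family S1"
    using \<open>A1 \<in> S\<close> perfect_family_restrict[OF assms(2)] unfolding S1_def by auto
  have S1: "c \<in> B" "order_convex T B" if "B \<in> S1" for B
    using that \<open>c \<in> A1\<close> conv unfolding S1_def by auto
  define below where "below B = {t\<in>T. t < c \<and> t \<notin> B}" for B
  define upto where "upto B = {t\<in>T. t \<le> c \<or> t \<in> B}" for B
  have segments: "initial_segment T (below B)" "initial_segment T (upto B)" if "B \<in> S1" for B
  proof -
    have between: "y \<in> B" if "x \<in> B" "y \<in> T" "x \<le> y \<and> y \<le> c \<or> c \<le> y \<and> y \<le> x" for x y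
      using S1[OF \<open>B \<in> S1\<close>] that unfolding order_convex_def by blast
    show "initial_segment T (below B)"
      unfolding initial_segment_def
    proof (intro conjI ballI impI)
      fix x y assume "x \<in> below B" "y \<in> T" "y \<le> x"
      then have "y < c" "x < c" "x \<in> T" "x \<notin> B" by (auto simp: below_def)
      then have "y \<notin> B" using between[of y x] \<open>y \<le> x\<close> less_imp_le by blast
      then show "y \<in> below B" using \<open>y < c\<close> \<open>y \<in> T\<close> by (simp add: below_def)
    qed (auto simp: below_def)
    show "initial_segment T (upto B)"
      unfolding initial_segment_def
    proof (intro conjI ballI impI)
      fix x y assume "x \<in> upto B" "y \<in> T" "y \<le> x"
      then have "x \<le> c \<or> x \<in> B" by (simp add: upto_def)
      then have "y \<le> c \<or> y \<in> B" using between[of x y] \<open>y \<in> T\<close> \<open>y \<le> x\<close> by fastforce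
      then show "y \<in> upto B" using \<open>y \<in> T\<close> by (simp add: upto_def)
    qed (auto simp: upto_def)
  qed
  have determined: "B = upto B - below B" if "B \<in> S1" for B
  proof -
    have "c \<in> B" "B \<subseteq> T" using S1[OF that] by (auto simp: order_convex_def)
    then show ?thesis by (auto simp: below_def upto_def le_less)
  qed
  have below_local: "below A \<inter> G = below B \<inter> G" and upto_local: "upto A \<inter> G = upto B \<inter> G"
    if "A \<inter> G = B \<inter> G" for A B G
    using that unfolding below_def upto_def by blast+
  show ?thesis
  proof (cases "perfect_family (below ` S1)")
    case True
    show ?thesis
      by (rule perfect_initial_segments_not_order_scattered[where Q = "below ` S1"])
        (use True \<open>S1 \<noteq> {}\<close> segments in auto)
  next
    case False
    then obtain K G0 where "K \<in> below ` S1" "finite G0"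
      and isolated: "\<And>K'. K' \<in> below ` S1 \<Longrightarrow> K' \<inter> G0 = K \<inter> G0 \<Longrightarrow> K' = K"
      by (rule not_perfect_familyE) blast
    then obtain A0 where "A0 \<in> S1" "K = below A0" by blast
    define S2 where "S2 = {B\<in>S1. B \<inter> G0 = A0 \<inter> G0}"
    have "S2 \<noteq> {}" "perfect_family S2" "S2 \<subseteq> S1"
      using \<open>A0 \<in> S1\<close> perfect_family_restrict[OF \<open>perfect_family S1\<close> \<open>finite G0\<close>]
      unfolding S2_def by auto
    have below_const: "below B = below A0" if "B \<in> S2" for B
    proof (rule isolated[unfolded \<open>K = below A0\<close>])
      show "below B \<in> below ` S1" using that \<open>S2 \<subseteq> S1\<close> by blast
      show "below B \<inter> G0 = below A0 \<inter> G0" using that below_local unfolding S2_def by blast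
    qed
    have "B = upto B - below A0" if "B \<in> S2" for B
      using determined[of B] below_const[OF that] that \<open>S2 \<subseteq> S1\<close> by auto
    then have "inj_on upto S2" by (metis inj_onI)
    have "perfect_family (upto ` S2)"
      by (rule perfect_family_image[OF \<open>perfect_family S2\<close> \<open>inj_on upto S2\<close>])
        (use upto_local in metis)
    show ?thesis
      by (rule perfect_initial_segments_not_order_scattered[where Q = "upto ` S2"])
        (use \<open>perfect_family (upto ` S2)\<close> \<open>S2 \<noteq> {}\<close> \<open>S2 \<subseteq> S1\<close> segments in auto)
  qed
qed

section \<open>Subfamilies of the Cantor cube without isolated points\<close>

lemma topspace_cantor_cube: "topspace (cantor_cube X) = (\<Pi>\<^sub>E x\<in>X. UNIV)"
  by (simp add: cantor_cube_def)

lemma char_on_in_topspace: "char_on X A \<in> topspace (cantor_cube X)"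
  by (simp add: topspace_cantor_cube char_on_def)

lemma char_on_agree_iff:
  assumes "A \<subseteq> X" "B \<subseteq> X" "G \<subseteq> X"
  shows "(\<forall>x\<in>G. char_on X A x = char_on X B x) \<longleftrightarrow> A \<inter> G = B \<inter> G"
  using assms unfolding char_on_def by auto

lemma openin_cantor_cube_cylinder:
  assumes "finite G" "G \<subseteq> X"
  shows "openin (cantor_cube X) {h \<in> topspace (cantor_cube X). \<forall>x\<in>G. h x = g x}"
proof -
  define V where "V x = (if x \<in> G then {g x} else UNIV)" for x
  have "openin (cantor_cube X) (\<Pi>\<^sub>E x\<in>X. V x)"
    unfolding cantor_cube_def
  proof (rule product_topology_basis)
    have "{x. V x \<noteq> topspace (discrete_topology UNIV)} \<subseteq> G" by (auto simp: V_def)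
    then show "finite {x. V x \<noteq> topspace (discrete_topology UNIV)}"
      using \<open>finite G\<close> finite_subset by blast
  qed simp
  moreover have "(\<Pi>\<^sub>E x\<in>X. V x) = {h \<in> topspace (cantor_cube X). \<forall>x\<in>G. h x = g x}"
    using \<open>G \<subseteq> X\<close>
    by (auto simp: topspace_cantor_cube V_def PiE_iff extensional_def split: if_splits)
  ultimately show ?thesis by simp
qed

lemma openin_cantor_cube_contains_cylinder:
  assumes "openin (cantor_cube X) U" "g \<in> U"
  obtains G where "finite G" "G \<subseteq> X"
    "\<And>h. h \<in> topspace (cantor_cube X) \<Longrightarrow> \<forall>x\<in>G. h x = g x \<Longrightarrow> h \<in> U"
proof -
  obtain V where V: "finite {x \<in> X. V x \<noteq> UNIV}" "g \<in> (\<Pi>\<^sub>E x\<in>X. V x)" "(\<Pi>\<^sub>E x\<in>X. V x) \<subseteq> U"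
    using assms unfolding cantor_cube_def openin_product_topology_alt by auto
  show ?thesis
  proof (rule that[of "{x \<in> X. V x \<noteq> UNIV}"])
    fix h assume h: "h \<in> topspace (cantor_cube X)" "\<forall>x\<in>{x \<in> X. V x \<noteq> UNIV}. h x = g x"
    have "h \<in> (\<Pi>\<^sub>E x\<in>X. V x)"
    proof (rule PiE_I)
      show "h x \<in> V x" if "x \<in> X" for x
        using that h(2) V(2) by (cases "V x = UNIV") (auto simp: PiE_iff)
      show "h x = undefined" if "x \<notin> X" for x
        using that h(1) by (simp add: topspace_cantor_cube PiE_iff extensional_def)
    qed
    then show "h \<in> U" using V(3) by blast
  qed (use V(1) in auto)
qed

lemma isolated_in_family_topology_iff:
  assumes "F \<subseteq> Pow X" "S \<subseteq> F" "A \<in> S"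
  shows "(\<exists>U. openin (family_topology X F) U \<and> U \<inter> char_on X ` S = {char_on X A}) \<longleftrightarrow>
    (\<exists>G. finite G \<and> (\<forall>B\<in>S. B \<inter> G = A \<inter> G \<longrightarrow> B = A))"
proof
  assume "\<exists>U. openin (family_topology X F) U \<and> U \<inter> char_on X ` S = {char_on X A}"
  then obtain W where W: "openin (cantor_cube X) W"
    and isolating: "W \<inter> char_on X ` F \<inter> char_on X ` S = {char_on X A}"
    unfolding family_topology_def openin_subtopology by blast
  then have "char_on X A \<in> W" by blast
  then obtain G where "finite G" "G \<subseteq> X"
    and G: "\<And>h. h \<in> topspace (cantor_cube X) \<Longrightarrow> \<forall>x\<in>G. h x = char_on X A x \<Longrightarrow> h \<in> W"
    using openin_cantor_cube_contains_cylinder[OF W] by blast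
  have "B = A" if "B \<in> S" "B \<inter> G = A \<inter> G" for B
  proof -
    have "B \<subseteq> X" "A \<subseteq> X" using assms that by auto
    then have "char_on X B \<in> W"
      using G char_on_in_topspace char_on_agree_iff \<open>G \<subseteq> X\<close> that(2) by metis
    then have "char_on X B = char_on X A" using isolating that(1) assms(2) by blast
    then show "B = A" using \<open>B \<subseteq> X\<close> \<open>A \<subseteq> X\<close> by (metis char_on_agree_iff order_refl Int_absorb2)
  qed
  then show "\<exists>G. finite G \<and> (\<forall>B\<in>S. B \<inter> G = A \<inter> G \<longrightarrow> B = A)" using \<open>finite G\<close> by blast
next
  assume "\<exists>G. finite G \<and> (\<forall>B\<in>S. B \<inter> G = A \<inter> G \<longrightarrow> B = A)"
  then obtain G where "finite G" and G: "\<And>B. B \<in> S \<Longrightarrow> B \<inter> G = A \<inter> G \<Longrightarrow> B = A" by blast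
  define W where "W = {h \<in> topspace (cantor_cube X). \<forall>x\<in>G \<inter> X. h x = char_on X A x}"
  have "openin (cantor_cube X) W"
    unfolding W_def using \<open>finite G\<close> by (intro openin_cantor_cube_cylinder) auto
  then have "openin (family_topology X F) (W \<inter> char_on X ` F)"
    unfolding family_topology_def openin_subtopology by blast
  moreover have "W \<inter> char_on X ` F \<inter> char_on X ` S = {char_on X A}"
  proof
    show "{char_on X A} \<subseteq> W \<inter> char_on X ` F \<inter> char_on X ` S"
      using assms char_on_in_topspace unfolding W_def by blast
    show "W \<inter> char_on X ` F \<inter> char_on X ` S \<subseteq> {char_on X A}"
    proof
      fix h assume "h \<in> W \<inter> char_on X ` F \<inter> char_on X ` S"
      then obtain B where "B \<in> S" "h = char_on X B" "\<forall>x\<in>G \<inter> X. h x = char_on X A x"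
        unfolding W_def by blast
      moreover have "B \<subseteq> X" "A \<subseteq> X" using assms calculation(1) by auto
      ultimately have "B \<inter> (G \<inter> X) = A \<inter> (G \<inter> X)" using char_on_agree_iff[of B X A "G \<inter> X"] by blast
      then have "B = A" using G[OF \<open>B \<in> S\<close>] \<open>B \<subseteq> X\<close> \<open>A \<subseteq> X\<close> by blast
      then show "h \<in> {char_on X A}" using \<open>h = char_on X B\<close> by simp
    qed
  qed
  ultimately show "\<exists>U. openin (family_topology X F) U \<and> U \<inter> char_on X ` S = {char_on X A}"
    by (metis Int_assoc)
qed

lemma scattered_family_topology_iff:
  assumes "F \<subseteq> Pow X"
  shows "scattered_space (family_topology X F) \<longleftrightarrow> (\<forall>S\<subseteq>F. S \<noteq> {} \<longrightarrow> \<not> perfect_family S)"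
proof -
  have top: "topspace (family_topology X F) = char_on X ` F"
    unfolding family_topology_def using char_on_in_topspace by auto
  define isolated where "isolated S x \<longleftrightarrow> (\<exists>U. openin (family_topology X F) U \<and> U \<inter> S = {x})" for S x
  have "scattered_space (family_topology X F) \<longleftrightarrow>
      (\<forall>S\<subseteq>char_on X ` F. S \<noteq> {} \<longrightarrow> (\<exists>x\<in>S. isolated S x))"
    unfolding scattered_space_def top isolated_def by blast
  also have "\<dots> \<longleftrightarrow> (\<forall>S\<subseteq>F. S \<noteq> {} \<longrightarrow> (\<exists>A\<in>S. isolated (char_on X ` S) (char_on X A)))"
    by (simp add: subset_image_iff imp_ex)
  also have "\<dots> \<longleftrightarrow> (\<forall>S\<subseteq>F. S \<noteq> {} \<longrightarrow> (\<exists>A\<in>S. \<exists>G. finite G \<and> (\<forall>B\<in>S. B \<inter> G = A \<inter> G \<longrightarrow> B = A)))"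
    using isolated_in_family_topology_iff[OF assms] unfolding isolated_def
    by (intro all_cong1 imp_cong refl bex_cong)
  also have "\<dots> \<longleftrightarrow> (\<forall>S\<subseteq>F. S \<noteq> {} \<longrightarrow> \<not> perfect_family S)"
    unfolding perfect_family_def by meson
  finally show ?thesis .
qed

section \<open>Traces of convex sets\<close>

lemma CoE:
  assumes "A \<in> Co X"
  obtains C where "convex C" "A = C \<inter> X"
  using assms unfolding Co_def by blast

lemma Co_subset_Pow: "Co X \<subseteq> Pow X"
  unfolding Co_def by blast

lemma Co_compact_subset_Co: "Co_compact X \<subseteq> Co X"
  unfolding Co_compact_def Co_def using convex_convex_hull by blast

lemma convex_hull_Int_Co:
  assumes "A \<in> Co X"
  shows "convex hull A \<inter> X = A"
proof -
  obtain C where "convex C" "A = C \<inter> X" using assms by (rule CoE)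
  then have "convex hull A \<subseteq> C" by (simp add: hull_minimal)
  then show ?thesis using \<open>A = C \<inter> X\<close> hull_subset[of A convex] by blast
qed

lemma convex_Union_chain:
  assumes "\<And>A. A \<in> \<A> \<Longrightarrow> convex A" and "\<And>A B. A \<in> \<A> \<Longrightarrow> B \<in> \<A> \<Longrightarrow> A \<subseteq> B \<or> B \<subseteq> A"
  shows "convex (\<Union>\<A>)"
proof (rule convexI)
  fix x y and u v :: real assume "x \<in> \<Union>\<A>" "y \<in> \<Union>\<A>" "0 \<le> u" "0 \<le> v" "u + v = 1"
  moreover obtain C where "C \<in> \<A>" "x \<in> C" "y \<in> C" using assms(2) calculation(1,2) by blast
  ultimately show "u *\<^sub>R x + v *\<^sub>R y \<in> \<Union>\<A>"
    using assms(1) convexD by blast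
qed

lemma Union_chain_in_Co:
  assumes "\<A> \<subseteq> Co X" and chain: "\<And>A B. A \<in> \<A> \<Longrightarrow> B \<in> \<A> \<Longrightarrow> A \<subseteq> B \<or> B \<subseteq> A"
  shows "\<Union>\<A> \<in> Co X"
proof -
  have "convex (\<Union>((hull) convex ` \<A>))"
  proof (rule convex_Union_chain)
    fix C D assume "C \<in> (hull) convex ` \<A>" "D \<in> (hull) convex ` \<A>"
    then obtain A B where "A \<in> \<A>" "B \<in> \<A>" "C = convex hull A" "D = convex hull B" by blast
    then show "C \<subseteq> D \<or> D \<subseteq> C" using chain[of A B] hull_mono by metis
  qed auto
  moreover have "\<Union>\<A> = \<Union>((hull) convex ` \<A>) \<inter> X"
    using assms(1) convex_hull_Int_Co by blast
  ultimately show ?thesis unfolding Co_def by blast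
qed

lemma order_scattered_subset: "P \<subseteq> Q \<Longrightarrow> order_scattered Q \<Longrightarrow> order_scattered P"
  unfolding order_scattered_def by blast

lemma strict_mono_positive_rat:
  obtains \<sigma> :: "rat \<Rightarrow> rat" where "strict_mono \<sigma>" "\<And>q. 0 < \<sigma> q"
proof
  define \<sigma> where "\<sigma> q = (if 0 \<le> q then q + 1 else 1 / (1 - q))" for q :: rat
  show "0 < \<sigma> q" for q by (simp add: \<sigma>_def)
  show "strict_mono \<sigma>"
  proof (rule strict_monoI)
    fix q q' :: rat assume "q < q'"
    show "\<sigma> q < \<sigma> q'"
    proof (cases "0 \<le> q")
      case False
      then have "\<sigma> q < 1" by (simp add: \<sigma>_def)
      moreover have "1 \<le> \<sigma> q'" if "0 \<le> q'" using that by (simp add: \<sigma>_def)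
      moreover have "\<sigma> q < \<sigma> q'" if "q' < 0"
        using that False \<open>q < q'\<close> by (simp add: \<sigma>_def frac_less2)
      ultimately show ?thesis by force
    qed (use \<open>q < q'\<close> in \<open>simp add: \<sigma>_def\<close>)
  qed
qed

lemma closed_segment_on_line:
  fixes a d :: "'v::real_vector"
  shows "closed_segment (a + p *\<^sub>R d) (a + s *\<^sub>R d) = (\<lambda>t. a + t *\<^sub>R d) ` closed_segment p s"
proof -
  have "closed_segment (p *\<^sub>R d) (s *\<^sub>R d) = (\<lambda>t. t *\<^sub>R d) ` closed_segment p s"
    by (rule closed_segment_linear_image) (rule linear_scaleR_left)
  then show ?thesis by (simp add: closed_segment_translation image_image)
qed

lemma order_scattered_Co_if_scattered_space:
  assumes "scattered_space (family_topology X (Co X))"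
  shows "order_scattered (Co X)"
  unfolding order_scattered_def
proof
  assume "\<exists>f::rat \<Rightarrow> 'a set. range f \<subseteq> Co X \<and> strict_mono f"
  then obtain f :: "rat \<Rightarrow> 'a set" where "range f \<subseteq> Co X" "strict_mono f" by blast
  define S where "S = range (\<lambda>r. \<Union>(f ` {..<r}))"
  have "S \<subseteq> Co X"
  proof (clarsimp simp: S_def)
    fix r
    show "\<Union>(f ` {..<r}) \<in> Co X"
    proof (rule Union_chain_in_Co)
      show "f ` {..<r} \<subseteq> Co X" using \<open>range f \<subseteq> Co X\<close> by blast
      show "A \<subseteq> B \<or> B \<subseteq> A" if AB: "A \<in> f ` {..<r}" "B \<in> f ` {..<r}" for A B
      proof -
        obtain q q' where "A = f q" "B = f q'" using AB by blast
        then show ?thesis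
          using \<open>strict_mono f\<close> by (cases "q \<le> q'") (simp_all add: strict_mono_less_eq)
      qed
    qed
  qed
  moreover have "S \<noteq> {}" "perfect_family S"
    using perfect_family_lower_unions[OF \<open>strict_mono f\<close>] by (auto simp: S_def)
  ultimately show False
    using assms scattered_family_topology_iff[OF Co_subset_Pow] by blast
qed

lemma order_scattered_line_if_Co_compact:
  fixes X :: "'v::real_vector set"
  assumes "d \<noteq> 0" and "order_scattered (Co_compact X)"
  shows "order_scattered {t. a + t *\<^sub>R d \<in> X}"
  unfolding order_scattered_def
proof
  define \<phi> where "\<phi> t = a + t *\<^sub>R d" for t
  have \<phi>_eq: "\<phi> s = \<phi> t \<longleftrightarrow> s = t" for s t using \<open>d \<noteq> 0\<close> by (simp add: \<phi>_def)
  assume "\<exists>g::rat \<Rightarrow> real. range g \<subseteq> {t. a + t *\<^sub>R d \<in> X} \<and> strict_mono g"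
  then obtain g :: "rat \<Rightarrow> real" where g: "\<And>q. \<phi> (g q) \<in> X" "strict_mono g"
    by (auto simp: \<phi>_def)
  obtain \<sigma> :: "rat \<Rightarrow> rat" where "strict_mono \<sigma>" "\<And>q. 0 < \<sigma> q"
    by (rule strict_mono_positive_rat) auto
  define b where "b q = g (\<sigma> q)" for q
  have "strict_mono b" using \<open>strict_mono \<sigma>\<close> g(2) by (simp add: b_def strict_mono_def)
  have "g 0 < b q" for q using g(2) \<open>0 < \<sigma> q\<close> by (simp add: b_def strict_mono_less)
  define f where "f q = convex hull {\<phi> (g 0), \<phi> (b q)} \<inter> X" for q
  have f_eq: "f q = \<phi> ` {g 0..b q} \<inter> X" for q
    using \<open>g 0 < b q\<close> unfolding f_def \<phi>_def
    by (simp add: segment_convex_hull[symmetric] closed_segment_on_line closed_segment_eq_real_ivl)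
  have "f q \<in> Co_compact X" for q
    unfolding Co_compact_def f_def using g(1)
    by (intro CollectI exI[of _ "{\<phi> (g 0), \<phi> (b q)}"]) (auto simp: b_def)
  then have "range f \<subseteq> Co_compact X" by blast
  moreover have "strict_mono f"
  proof (rule strict_monoI)
    fix q q' :: rat assume "q < q'"
    then have "b q < b q'" using \<open>strict_mono b\<close> by (simp add: strict_mono_less)
    then have "f q \<subseteq> f q'" unfolding f_eq by auto
    moreover have "\<phi> (b q') \<in> f q' - f q"
      using \<open>b q < b q'\<close> \<open>g 0 < b q'\<close> g(1) unfolding f_eq b_def by (auto simp: \<phi>_eq)
    ultimately show "f q < f q'" by blast
  qed
  ultimately show False using assms(2) unfolding order_scattered_def by blast
qed

lemma scattered_space_Co_if_order_scattered_line:
  fixes X :: "'v::real_vector set"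
  assumes "d \<noteq> 0" and X: "X \<subseteq> range (\<lambda>t. a + t *\<^sub>R d)"
    and "order_scattered {t. a + t *\<^sub>R d \<in> X}"
  shows "scattered_space (family_topology X (Co X))"
  unfolding scattered_family_topology_iff[OF Co_subset_Pow]
proof (intro allI impI notI)
  define \<phi> where "\<phi> t = a + t *\<^sub>R d" for t
  define T where "T = \<phi> -` X"
  fix S assume "S \<subseteq> Co X" "S \<noteq> {}" "perfect_family S"
  have perfect: "perfect_family (vimage \<phi> ` S)"
  proof (rule perfect_family_image)
    show "inj_on (vimage \<phi>) S"
    proof (rule inj_onI)
      fix A B assume "A \<in> S" "B \<in> S" "\<phi> -` A = \<phi> -` B"
      then have "\<phi> ` \<phi> -` A = \<phi> ` \<phi> -` B" by simp
      moreover have "A \<subseteq> range \<phi>" "B \<subseteq> range \<phi>"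
        using \<open>A \<in> S\<close> \<open>B \<in> S\<close> \<open>S \<subseteq> Co X\<close> Co_subset_Pow X unfolding \<phi>_def by blast+
      ultimately show "A = B" by (simp add: Int_absorb2)
    qed
    show "\<exists>G'. finite G' \<and> (\<forall>A\<in>S. \<forall>B\<in>S. A \<inter> G' = B \<inter> G' \<longrightarrow> \<phi> -` A \<inter> G = \<phi> -` B \<inter> G)"
      if "finite G" for G
      using that by (intro exI[of _ "\<phi> ` G"]) blast
  qed fact
  have convex: "order_convex T (\<phi> -` A)" if "A \<in> S" for A
  proof -
    have "A \<in> Co X" using that \<open>S \<subseteq> Co X\<close> by blast
    then obtain C where "convex C" "A = C \<inter> X" by (rule CoE)
    have "\<phi> y \<in> C" if "\<phi> x \<in> C" "\<phi> z \<in> C" "x \<le> y" "y \<le> z" for x y z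
    proof -
      have "y \<in> closed_segment x z" using that(3,4) by (simp add: closed_segment_eq_real_ivl)
      then have "\<phi> y \<in> closed_segment (\<phi> x) (\<phi> z)"
        unfolding \<phi>_def closed_segment_on_line by (rule imageI)
      then show ?thesis using closed_segment_subset[OF that(1,2) \<open>convex C\<close>] by blast
    qed
    then show ?thesis
      unfolding order_convex_def T_def \<open>A = C \<inter> X\<close> by blast
  qed
  have "\<not> order_scattered T"
    by (rule perfect_order_convex_family_not_order_scattered[where S = "vimage \<phi> ` S"])
      (use perfect convex \<open>S \<noteq> {}\<close> in auto)
  then show False
    using assms(3) unfolding T_def \<phi>_def vimage_def by simp
qed

theorem proposition5p5:
  fixes X :: "'v::real_vector set" and a d :: 'v
  assumes "d \<noteq> 0"
    and "X \<subseteq> {a + t *\<^sub>R d | t. True}"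
  shows "(scattered_space (family_topology X (Co X)) \<longleftrightarrow> order_scattered (Co X))
       \<and> (order_scattered (Co X) \<longleftrightarrow> order_scattered (Co_compact X))
       \<and> (order_scattered (Co_compact X) \<longleftrightarrow> order_scattered {t::real. a + t *\<^sub>R d \<in> X})"
proof -
  have "X \<subseteq> range (\<lambda>t. a + t *\<^sub>R d)" using assms(2) by blast
  then have "order_scattered {t. a + t *\<^sub>R d \<in> X} \<Longrightarrow> scattered_space (family_topology X (Co X))"
    using scattered_space_Co_if_order_scattered_line[OF \<open>d \<noteq> 0\<close>] by blast
  moreover have "order_scattered (Co X) \<Longrightarrow> order_scattered (Co_compact X)"
    using order_scattered_subset[OF Co_compact_subset_Co] .
  ultimately show ?thesis
    using order_scattered_Co_if_scattered_space order_scattered_line_if_Co_compact[OF \<open>d \<noteq> 0\<close>]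
    by blast
qed

end
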